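(* Let $J$ be a Jordan algebra with unit element $1$ over a field $F$ of characteristic $\neq 2,3$, and let $d$ be a derivation with invertible values of $J$. Then every proper ideal $I$ of $J$ satisfies $d(I) = 0$.
   Context: A Jordan algebra is a commutative algebra satisfying $(x^2,y,x)=0$, where $(a,b,c)=(ab)c-a(bc)$. In a Jordan algebra $J$ with unit $1$, an element $x$ is invertible if there exists $y \in J$ with $xy = 1$ and $x^2 y = x$. A derivation with invertible values of $J$ is a nonzero derivation $d$ of $J$ such that for every $x \in J$, $d(x)$ is either invertible or equal to $0$. *)

theory Defs
  imports Complex_Main
begin

text \<open>A (not necessarily finite-dimensional) algebra over a field 'f is modelled as the
  whole type 'a, which is an 'f-vector space via smult, with bilinear product mult.\<close>

definition jassoc :: "('a \<Rightarrow> 'a \<Rightarrow> 'a::ab_group_add) \<Rightarrow> 'a \<Rightarrow> 'a \<Rightarrow> 'a \<Rightarrow> 'a" where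
  "jassoc mult a b c = mult (mult a b) c - mult a (mult b c)"

definition bilinear_product ::
  "('f::field \<Rightarrow> 'a::ab_group_add \<Rightarrow> 'a) \<Rightarrow> ('a \<Rightarrow> 'a \<Rightarrow> 'a) \<Rightarrow> bool" where
  "bilinear_product smult mult \<longleftrightarrow>
     (\<forall>x y z. mult (x + y) z = mult x z + mult y z) \<and>
     (\<forall>x y z. mult x (y + z) = mult x y + mult x z) \<and>
     (\<forall>c x y. mult (smult c x) y = smult c (mult x y)) \<and>
     (\<forall>c x y. mult x (smult c y) = smult c (mult x y))"

definition unital_jordan_algebra ::
  "('f::field \<Rightarrow> 'a::ab_group_add \<Rightarrow> 'a) \<Rightarrow> ('a \<Rightarrow> 'a \<Rightarrow> 'a) \<Rightarrow> 'a \<Rightarrow> bool" where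
  "unital_jordan_algebra smult mult one \<longleftrightarrow>
     Vector_Spaces.vector_space smult \<and> bilinear_product smult mult \<and>
     (\<forall>x y. mult x y = mult y x) \<and>
     (\<forall>x y. jassoc mult (mult x x) y x = 0) \<and>
     (\<forall>x. mult one x = x \<and> mult x one = x)"

definition jinvertible :: "('a \<Rightarrow> 'a \<Rightarrow> 'a) \<Rightarrow> 'a \<Rightarrow> 'a \<Rightarrow> bool" where
  "jinvertible mult one x \<longleftrightarrow> (\<exists>y. mult x y = one \<and> mult (mult x x) y = x)"

definition jderivation ::
  "('f::field \<Rightarrow> 'a::ab_group_add \<Rightarrow> 'a) \<Rightarrow> ('a \<Rightarrow> 'a \<Rightarrow> 'a) \<Rightarrow> ('a \<Rightarrow> 'a) \<Rightarrow> bool" where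
  "jderivation smult mult d \<longleftrightarrow>
     Vector_Spaces.linear smult smult d \<and> (\<forall>x y. d (mult x y) = mult (d x) y + mult x (d y))"

definition derivation_invertible_values ::
  "('f::field \<Rightarrow> 'a::ab_group_add \<Rightarrow> 'a) \<Rightarrow> ('a \<Rightarrow> 'a \<Rightarrow> 'a) \<Rightarrow> 'a \<Rightarrow> ('a \<Rightarrow> 'a) \<Rightarrow> bool" where
  "derivation_invertible_values smult mult one d \<longleftrightarrow>
     jderivation smult mult d \<and> d \<noteq> (\<lambda>x. 0) \<and>
     (\<forall>x. jinvertible mult one (d x) \<or> d x = 0)"

definition jideal ::
  "('f::field \<Rightarrow> 'a::ab_group_add \<Rightarrow> 'a) \<Rightarrow> ('a \<Rightarrow> 'a \<Rightarrow> 'a) \<Rightarrow> 'a set \<Rightarrow> bool" where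
  "jideal smult mult I \<longleftrightarrow>
     module.subspace smult I \<and> (\<forall>x\<in>I. \<forall>y. mult x y \<in> I \<and> mult y x \<in> I)"

end

theory Submission
  imports Defs
begin

text \<open>Take z in the ideal with d z = u \<noteq> 0, hence u invertible with u v = 1 and u^2 v = u.
  A proper ideal contains no invertible element, so the value d(z^2) = 2 z u, which lies in
  the ideal, must vanish; as 2 is invertible, z u = 0. Differentiating once more gives
  u^2 = - z d(u), so u^2 and then u = u^2 v lie in the ideal, contradicting the invertibility
  of u.\<close>

lemma two_neq_zero_if_CHAR_neq_2:
  assumes "CHAR('a::idom) \<noteq> 2"
  shows "(2::'a) \<noteq> 0"
proof
  assume "(2::'a) = 0"
  then have "CHAR('a) dvd 2"
    using of_nat_eq_0_iff_char_dvd[of 2, where 'a='a] by simp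
  then show False
    using assms CHAR_not_1' dvd_imp_le[of "CHAR('a)" 2] by (cases "CHAR('a)") (auto simp: le_Suc_eq)
qed

lemma (in vector_space) eq_0_if_add_self_eq_0:
  fixes x :: 'b
  assumes "(2::'a) \<noteq> 0" and "x + x = 0"
  shows "x = 0"
proof -
  have "(1/2 + 1/2 :: 'a) = 1"
    using assms(1) by (simp add: field_simps)
  then have "x = scale (1/2 + 1/2) x"
    by (metis scale_one)
  also have "\<dots> = scale (1/2) (x + x)"
    by (simp only: scale_left_distrib scale_right_distrib)
  finally show ?thesis
    using assms(2) by simp
qed

lemma not_jinvertible_if_mem_proper_jideal:
  assumes "jideal smult mult I" and "I \<noteq> UNIV" and "\<And>x. mult one x = x" and "w \<in> I"
  shows "\<not> jinvertible mult one w"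
proof
  assume "jinvertible mult one w"
  then obtain v where "mult w v = one"
    unfolding jinvertible_def by blast
  then have "one \<in> I"
    using assms(1,4) unfolding jideal_def by metis
  then have "mult one x \<in> I" for x
    using assms(1) unfolding jideal_def by blast
  then show False
    using assms(2,3) by auto
qed

lemma derivation_invertible_values_vanishes_on_proper_jideal:
  fixes smult :: "'f::field \<Rightarrow> 'a::ab_group_add \<Rightarrow> 'a"
  assumes "Vector_Spaces.vector_space smult" and "(2::'f) \<noteq> 0"
    and comm: "\<And>x y. mult x y = mult y x" and unit: "\<And>x. mult one x = x"
    and "derivation_invertible_values smult mult one d"
    and "jideal smult mult I" and "I \<noteq> UNIV" and z: "z \<in> I"
  shows "d z = 0"
proof (rule ccontr)
  assume "d z \<noteq> 0"
  interpret vector_space smult by fact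
  interpret Vector_Spaces.linear smult smult d
    using assms(5) unfolding derivation_invertible_values_def jderivation_def by blast
  have leibniz: "\<And>x y. d (mult x y) = mult (d x) y + mult x (d y)"
    and invertible_or_zero: "\<And>x. jinvertible mult one (d x) \<or> d x = 0"
    using assms(5) unfolding derivation_invertible_values_def jderivation_def by auto
  have ideal: "subspace I" "\<And>x y. x \<in> I \<Longrightarrow> mult x y \<in> I"
    using assms(6) unfolding jideal_def by auto
  have noninvertible: "\<not> jinvertible mult one w" if "w \<in> I" for w
    using not_jinvertible_if_mem_proper_jideal assms(6,7) unit that .
  define u where "u = d z"
  have "jinvertible mult one u"
    using invertible_or_zero \<open>d z \<noteq> 0\<close> unfolding u_def by blast
  then obtain v where "mult (mult u u) v = u"
    unfolding jinvertible_def by blast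
  have "mult z u + mult z u = d (mult z z)"
    using leibniz comm unfolding u_def by metis
  moreover have "d (mult z z) \<in> I"
    using calculation ideal z subspace_add by metis
  ultimately have "mult z u + mult z u = 0"
    using invertible_or_zero noninvertible by metis
  then have "mult z u = 0"
    using eq_0_if_add_self_eq_0 assms(2) by blast
  then have "mult u u = - mult z (d u)"
    using leibniz[of z u] zero unfolding u_def by (simp add: eq_neg_iff_add_eq_0)
  then have "mult u u \<in> I"
    using ideal z subspace_neg by metis
  then have "u \<in> I"
    using ideal \<open>mult (mult u u) v = u\<close> by metis
  then show False
    using noninvertible \<open>jinvertible mult one u\<close> by blast
qed

theorem lemma2:
  fixes smult :: "'f::field \<Rightarrow> 'a::ab_group_add \<Rightarrow> 'a"
    and mult :: "'a \<Rightarrow> 'a \<Rightarrow> 'a" and one :: 'a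
    and d :: "'a \<Rightarrow> 'a" and I :: "'a set"
  assumes "CHAR('f) \<noteq> 2" and "CHAR('f) \<noteq> 3"
    and "unital_jordan_algebra smult mult one"
    and "derivation_invertible_values smult mult one d"
    and "jideal smult mult I" and "I \<noteq> UNIV"
  shows "\<forall>x\<in>I. d x = 0"
  using derivation_invertible_values_vanishes_on_proper_jideal
    two_neq_zero_if_CHAR_neq_2[OF assms(1)] assms(3-6)
  unfolding unital_jordan_algebra_def by blast

end
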